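(* Let $\mu \in X^*(\underline{T})$ be a character. \begin{enumerate} \item $\Lambda_W^\mu$ is the set of $\omega'\in \Lambda_W$ such that $\mathrm{Trns}_{\mu}(\omega', \underline{A}) \in \underline{C}_0 / (p-\pi)X^0(\underline{T})$. In particular, $\mathrm{Trns}_{\mu}(\omega', \underline{A})$ is $p$-regular (since our alcoves are open). \item For any $a\in \mathcal{A}$ and $\omega'\in \Lambda_W^\mu$, the image of $\mathrm{Trns}'_\mu(\omega',a)$ in $\Lambda_W$ is $p$-regular, in the same $\widetilde{\underline{W}}^{\mathrm{der}}$-orbit (for the dot action) as $\omega'+\overline{\mu-\eta}$ and is in alcove $\pi^{-1}(a)$. Moreover, there exists $\widetilde{w}\in \underline{W}_a^{\mathrm{der}}$ such that \[ \mathrm{Trns}_\mu(\omega',a)\equiv \widetilde{w}\cdot \big(\mu-\eta+(1-p\pi^{-1})\circ\mathrm{sec}(\omega')\big)\ \mod (p-\pi)X^0(\underline{T}) \] (note that $\underline{W}_a^{\mathrm{der}}$ acts naturally via the $p$-dot action on $X^*(\underline{T})/(p-\pi)X^0(\underline{T})$). \item $(\mathrm{Trns}_\mu(\omega',a)-\mu+\eta)|_{\underline{Z}}=(\mathrm{Trns}_\mu(\omega',a)-\mu)|_{\underline{Z}}\in (p-\pi)X^*(\underline{Z})$. \end{enumerate}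
   Context: Let $\underline{G}=(\mathrm{Res}_{\mathbb{F}_{p^f}/\mathbb{F}_p}\mathrm{GL}_3)\times\mathbb{F}\cong\mathrm{GL}_3^f$ with diagonal torus $\underline T$ and center $\underline Z$, $X^*(\underline T)\cong(\mathbb{Z}^3)^f$, $\eta=((1,0,-1))_i$, $\pi$ the Frobenius shift $(\pi\lambda)_i=\lambda_{i-1}$. Let $\Lambda_W$, $\Lambda_R$ be the weight and root lattices of $\underline G^{\mathrm{der}}\cong\mathrm{SL}_3^f$, $\lambda\mapsto\overline\lambda$ the restriction $X^*(\underline T)\to\Lambda_W$ with kernel $X^0(\underline T)$, $\mathrm{can}:\Lambda_R\to\ker(X^*(\underline T)\to X^*(\underline Z))$ the canonical isomorphism (identifying $\underline W_a^{\mathrm{der}}$ with the affine Weyl group of $\underline G$), and $\mathrm{sec}:\Lambda_W\to X^*(\underline T)$ a fixed section. All actions of (extended) affine Weyl groups are $p$-dot actions $t_\lambda w\cdot\mu=p\lambda+w(\mu+\eta)-\eta$. $\underline{A}$ is the lowest dominant $p$-restricted alcove for $\mathrm{SL}_3^f$, $\underline C_0$ the lowest dominant alcove in $X^*(\underline T)\otimes\mathbb R$, $\mathcal A=\{A,B\}^f$ the dominant $p$-restricted alcoves, $\widetilde{\underline W}^{+,\mathrm{der}}_1$ the elements of $\Lambda_W\rtimes S_3^f$ taking $\underline A$ into $\mathcal A$ (written $wt_{-\pi^{-1}\omega}$). Every element of $\Lambda_W\times\mathcal A$ is uniquely $(\omega+\nu,\pi wt_{-\pi^{-1}\omega}\cdot\underline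 A)$ with $\nu\in\Lambda_R$, $wt_{-\pi^{-1}\omega}\in\widetilde{\underline W}^{+,\mathrm{der}}_1$, and one defines $\mathrm{Trns}'_\mu(\omega+\nu,\pi wt_{-\pi^{-1}\omega}\cdot\underline A)=wt_{-\pi^{-1}\mathrm{sec}(\omega)}\cdot(\mu-\eta+\mathrm{can}(\nu)+\mathrm{sec}(\omega))\in X^*(\underline T)$ and $\mathrm{Trns}_\mu$ its image in $X^*(\underline T)/(p-\pi)X^0(\underline T)$ (independent of $\mathrm{sec}$). $\Lambda_W^\mu=\{\omega\in\Lambda_W:\omega+\overline{\mu-\eta}\in\underline A\}$. A weight $\lambda$ is $p$-regular if $\langle\lambda+\eta,\alpha^\vee\rangle\notin p\mathbb{Z}$ for all positive roots $\alpha$. *)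

theory Defs
  imports Complex_Main "HOL-Combinatorics.Permutations" "HOL-Computational_Algebra.Primes"
begin

text \<open>A (possibly real) weight of the diagonal torus of GL_3^f is a function
  x :: nat => nat => 'a, where x i j (i < f, j < 3) is the j-th entry of the
  i-th GL_3 factor; entries outside this range are 0 (predicate wf).
  Integral weights (X^*(T)) have 'a = int; points of X^*(T) (x) R have 'a = real.\<close>

type_synonym 'a wt = "nat \<Rightarrow> nat \<Rightarrow> 'a"

definition wf :: "nat \<Rightarrow> 'a::zero wt \<Rightarrow> bool" where
  "wf f x \<longleftrightarrow> (\<forall>i j. (f \<le> i \<or> 3 \<le> j) \<longrightarrow> x i j = 0)"

definition Xstar :: "nat \<Rightarrow> int wt set" where
  "Xstar f = {x. wf f x}"

definition wadd :: "'a::ring_1 wt \<Rightarrow> 'a wt \<Rightarrow> 'a wt" where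
  "wadd x y = (\<lambda>i j. x i j + y i j)"

definition wsub :: "'a::ring_1 wt \<Rightarrow> 'a wt \<Rightarrow> 'a wt" where
  "wsub x y = (\<lambda>i j. x i j - y i j)"

definition wsmul :: "int \<Rightarrow> 'a::ring_1 wt \<Rightarrow> 'a wt" where
  "wsmul c x = (\<lambda>i j. of_int c * x i j)"

definition of_int_wt :: "int wt \<Rightarrow> 'a::ring_1 wt" where
  "of_int_wt x = (\<lambda>i j. of_int (x i j))"

definition eta :: "nat \<Rightarrow> 'a::ring_1 wt" where
  "eta f = (\<lambda>i j. if i < f \<and> j = 0 then 1 else if i < f \<and> j = 2 then -1 else 0)"

definition piF :: "nat \<Rightarrow> 'a::zero wt \<Rightarrow> 'a wt" where
  "piF f x = (\<lambda>i j. if i < f then x ((i + f - 1) mod f) j else 0)"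

definition piInv :: "nat \<Rightarrow> 'a::zero wt \<Rightarrow> 'a wt" where
  "piInv f x = (\<lambda>i j. if i < f then x ((i + 1) mod f) j else 0)"

text \<open>X^0(T): characters trivial on the derived subgroup, i.e. each component
  is a multiple of (1,1,1).\<close>
definition X0 :: "nat \<Rightarrow> int wt set" where
  "X0 f = {c. wf f c \<and> (\<forall>i. c i 0 = c i 1 \<and> c i 1 = c i 2)}"

definition cong_ppi :: "nat \<Rightarrow> nat \<Rightarrow> int wt \<Rightarrow> int wt \<Rightarrow> bool" where
  "cong_ppi p f x y \<longleftrightarrow> (\<exists>c\<in>X0 f. wsub x y = wsub (wsmul (int p) c) (piF f c))"

text \<open>Lambda_W = X^*(T)/X^0(T) is modelled by the normal forms: the unique
  representative of each class whose third entry in every component is 0.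
  bar is the restriction map X^*(T) -> Lambda_W.\<close>
definition LW :: "nat \<Rightarrow> int wt set" where
  "LW f = {x. wf f x \<and> (\<forall>i. x i 2 = 0)}"

definition bar :: "nat \<Rightarrow> int wt \<Rightarrow> int wt" where
  "bar f x = (\<lambda>i j. if i < f \<and> j < 3 then x i j - x i 2 else 0)"

definition LR :: "nat \<Rightarrow> int wt set" where
  "LR f = {x \<in> LW f. \<forall>i<f. (3::int) dvd (x i 0 + x i 1 + x i 2)}"

text \<open>can: Lambda_R -> ker(X^*(T) -> X^*(Z)), the sum-zero representative.\<close>
definition can :: "nat \<Rightarrow> int wt \<Rightarrow> int wt" where
  "can f x = (\<lambda>i j. if i < f \<and> j < 3 then x i j - (x i 0 + x i 1 + x i 2) div 3 else 0)"

definition is_section :: "nat \<Rightarrow> (int wt \<Rightarrow> int wt) \<Rightarrow> bool" where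
  "is_section f s \<longleftrightarrow> (\<forall>\<omega>\<in>LW f. s \<omega> \<in> Xstar f \<and> bar f (s \<omega>) = \<omega>)"

definition Weyl :: "nat \<Rightarrow> (nat \<Rightarrow> nat \<Rightarrow> nat) set" where
  "Weyl f = {w. (\<forall>i<f. w i permutes {0..<3}) \<and> (\<forall>i\<ge>f. w i = id)}"

definition wact :: "(nat \<Rightarrow> nat \<Rightarrow> nat) \<Rightarrow> 'a wt \<Rightarrow> 'a wt" where
  "wact w x = (\<lambda>i j. x i (w i j))"

definition dot :: "nat \<Rightarrow> nat \<Rightarrow> int wt \<Rightarrow> (nat \<Rightarrow> nat \<Rightarrow> nat) \<Rightarrow> 'a::ring_1 wt \<Rightarrow> 'a wt" where
  "dot p f \<nu> w x = (\<lambda>i j. if i < f \<and> j < 3 then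
      of_int (int p * \<nu> i j) + wact w (wadd x (eta f)) i j - eta f i j else 0)"

definition p_regular :: "nat \<Rightarrow> nat \<Rightarrow> int wt \<Rightarrow> bool" where
  "p_regular p f x \<longleftrightarrow> (\<forall>i<f. \<forall>a b. a < b \<and> b < 3 \<longrightarrow>
      \<not> (int p dvd (wadd x (eta f) i a - wadd x (eta f) i b)))"

datatype alc = AlcA | AlcB

text \<open>in_alc p f a x: x lies in the alcove a = (a_i)_i in {A,B}^f, where A is the
  lowest p-restricted alcove and B the upper one of SL_3:
  A: 0 < <x+eta,alpha^vee> < p for all positive roots;
  B: 0 < <x+eta,alpha_1^vee>, <x+eta,alpha_2^vee> < p < <x+eta,alpha_0^vee> < 2p.\<close>
definition in_alc :: "nat \<Rightarrow> nat \<Rightarrow> (nat \<Rightarrow> alc) \<Rightarrow> 'a::linordered_idom wt \<Rightarrow> bool" where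
  "in_alc p f a x \<longleftrightarrow> (\<forall>i<f.
     (let h = (\<lambda>k l. wadd x (eta f) i k - wadd x (eta f) i l) in
       0 < h 0 1 \<and> h 0 1 < of_nat p \<and> 0 < h 1 2 \<and> h 1 2 < of_nat p \<and>
       (if a i = AlcA then 0 < h 0 2 \<and> h 0 2 < of_nat p
        else of_nat p < h 0 2 \<and> h 0 2 < 2 * of_nat p)))"

definition in_C0 :: "nat \<Rightarrow> nat \<Rightarrow> 'a::linordered_idom wt \<Rightarrow> bool" where
  "in_C0 p f x \<longleftrightarrow> in_alc p f (\<lambda>_. AlcA) x"

definition alc_pi :: "nat \<Rightarrow> (nat \<Rightarrow> alc) \<Rightarrow> (nat \<Rightarrow> alc)" where
  "alc_pi f a = (\<lambda>i. if i < f then a ((i + f - 1) mod f) else AlcA)"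

definition alc_piInv :: "nat \<Rightarrow> (nat \<Rightarrow> alc) \<Rightarrow> (nat \<Rightarrow> alc)" where
  "alc_piInv f a = (\<lambda>i. if i < f then a ((i + 1) mod f) else AlcA)"

definition calA :: "nat \<Rightarrow> (nat \<Rightarrow> alc) set" where
  "calA f = {a. \<forall>i\<ge>f. a i = AlcA}"

text \<open>(omega, w) represents w t_{-pi^{-1} omega} in Lambda_W x| S_3^f; it lies in
  W~_1^{+,der} if it takes the real alcove A into some alcove of calA.\<close>
definition W1plus :: "nat \<Rightarrow> nat \<Rightarrow> (int wt \<times> (nat \<Rightarrow> nat \<Rightarrow> nat)) set" where
  "W1plus p f = {(\<omega>, w). \<omega> \<in> LW f \<and> w \<in> Weyl f \<and>
      (\<exists>b\<in>calA f. \<forall>x::real wt. wf f x \<and> in_alc p f (\<lambda>_. AlcA) x \<longrightarrow>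
          in_alc p f b (dot p f (wsmul (-1) (piInv f \<omega>)) w x))}"

text \<open>(omega', a) = (omega + nu, pi w t_{-pi^{-1} omega} . A).\<close>
definition is_decomp :: "nat \<Rightarrow> nat \<Rightarrow> int wt \<Rightarrow> (nat \<Rightarrow> alc) \<Rightarrow>
    int wt \<Rightarrow> int wt \<Rightarrow> (nat \<Rightarrow> nat \<Rightarrow> nat) \<Rightarrow> bool" where
  "is_decomp p f \<omega>' a \<omega> \<nu> w \<longleftrightarrow>
     \<nu> \<in> LR f \<and> (\<omega>, w) \<in> W1plus p f \<and> \<omega>' = wadd \<omega> \<nu> \<and>
     (\<forall>x::real wt. wf f x \<and> in_alc p f (\<lambda>_. AlcA) x \<longrightarrow>
          in_alc p f (alc_piInv f a) (dot p f (wsmul (-1) (piInv f \<omega>)) w x))"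

definition decomp :: "nat \<Rightarrow> nat \<Rightarrow> int wt \<Rightarrow> (nat \<Rightarrow> alc) \<Rightarrow>
    int wt \<times> int wt \<times> (nat \<Rightarrow> nat \<Rightarrow> nat)" where
  "decomp p f \<omega>' a = (THE (\<omega>, \<nu>, w). is_decomp p f \<omega>' a \<omega> \<nu> w)"

definition Trns' :: "nat \<Rightarrow> nat \<Rightarrow> (int wt \<Rightarrow> int wt) \<Rightarrow> int wt \<Rightarrow> int wt \<Rightarrow> (nat \<Rightarrow> alc) \<Rightarrow> int wt" where
  "Trns' p f sec \<mu> \<omega>' a = (case decomp p f \<omega>' a of (\<omega>, \<nu>, w) \<Rightarrow>
      dot p f (wsmul (-1) (piInv f (sec \<omega>))) w
        (wadd (wadd (wsub \<mu> (eta f)) (can f \<nu>)) (sec \<omega>)))"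

definition LWmu :: "nat \<Rightarrow> nat \<Rightarrow> int wt \<Rightarrow> int wt set" where
  "LWmu p f \<mu> = {\<omega> \<in> LW f. in_alc p f (\<lambda>_. AlcA) (wadd \<omega> (bar f (wsub \<mu> (eta f))))}"

definition resZ :: "nat \<Rightarrow> int wt \<Rightarrow> (nat \<Rightarrow> int)" where
  "resZ f x = (\<lambda>i. if i < f then x i 0 + x i 1 + x i 2 else 0)"

definition piZ :: "nat \<Rightarrow> (nat \<Rightarrow> int) \<Rightarrow> (nat \<Rightarrow> int)" where
  "piZ f z = (\<lambda>i. if i < f then z ((i + f - 1) mod f) else 0)"

end

theory Submission
  imports Defs
begin

text \<open>For every label L of a p-restricted alcove and every class r in Lambda_W / Lambda_R there is
  exactly one element t_n s of the extended affine Weyl group of SL_3, with n in the class r, that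
  maps A onto L; it is read off a six-entry table, and its uniqueness is detected by the images of
  three interior points of A. Componentwise this makes the decomposition
  (omega', a) = (omega + nu, pi w t_(-pi^(-1) omega) . A), and hence Trns', explicit.

  Since a section and can only move weights inside their X^0(T)-cosets and the dot action of
  S_3^f respects these cosets, Trns'_mu(omega', a) agrees modulo X^0(T) with
  w t_(-pi^(-1) omega) . (omega' + bar(mu - eta)); for omega' in Lambda_W^mu this point lies in
  pi^(-1)(a), which gives the alcove, orbit and p-regularity statements. On the centre S_3^f acts
  trivially and eta restricts to 0, so only the coboundary (p - pi) of the central characters of
  sec(omega) survives. Finally, moving the translation p pi^(-1) can(nu) through w and replacing
  sec(omega) + can(nu) by sec(omega') yields the affine Weyl group element, up to (p - pi) X^0(T).\<close>


definition alcove_coords :: "'a::linordered_idom \<Rightarrow> alc \<Rightarrow> (nat \<Rightarrow> 'a) \<Rightarrow> bool" where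
  "alcove_coords P L z \<longleftrightarrow> 0 < z 0 - z 1 \<and> z 0 - z 1 < P \<and> 0 < z 1 - z 2 \<and> z 1 - z 2 < P \<and>
     (if L = AlcA then 0 < z 0 - z 2 \<and> z 0 - z 2 < P else P < z 0 - z 2 \<and> z 0 - z 2 < 2 * P)"

lemma in_alc_iff_alcove_coords:
  "in_alc p f L x \<longleftrightarrow> (\<forall>i<f. alcove_coords (of_nat p) (L i) (wadd x (eta f) i))"
  unfolding in_alc_def alcove_coords_def Let_def by simp

lemma alcove_coords_cong:
  "(\<And>j. j < 3 \<Longrightarrow> z j = z' j) \<Longrightarrow> alcove_coords P L z \<longleftrightarrow> alcove_coords P L z'"
  unfolding alcove_coords_def by (simp add: numeral_3_eq_3)

lemma alcove_coords_shift: "alcove_coords P L (\<lambda>j. z j + c) \<longleftrightarrow> alcove_coords P L z"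
  unfolding alcove_coords_def by simp

lemma alcove_coords_of_int:
  "alcove_coords (of_int P :: 'a::linordered_idom) L (\<lambda>j. of_int (z j)) \<longleftrightarrow> alcove_coords P L z"
proof -
  have "of_int a - of_int b = (of_int (a - b) :: 'a)" "2 * of_int P = (of_int (2 * P) :: 'a)"
    for a b by simp_all
  then show ?thesis unfolding alcove_coords_def by (simp only: of_int_less_iff of_int_0_less_iff)
qed

lemma alcove_coords_scale:
  fixes c :: "'a::linordered_idom"
  assumes "0 < c"
  shows "alcove_coords (c * P) L (\<lambda>j. c * z j) \<longleftrightarrow> alcove_coords P L z"
proof -
  have "2 * (c * P) = c * (2 * P)" by (simp add: mult.left_commute)
  then show ?thesis
    using assms unfolding alcove_coords_def
    by (simp add: zero_less_mult_iff mult_less_cancel_left_pos flip: right_diff_distrib)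
qed

lemma not_dvd_if_between_multiples:
  fixes P x :: int
  assumes "P * k < x" "x < P * (k + 1)"
  shows "\<not> P dvd x"
proof
  assume "P dvd x"
  then obtain m where x: "x = P * m" by blast
  have "P * k < P * k + P" using assms by (simp add: distrib_left)
  then have "0 < P" by simp
  with assms have "k < m" "m < k + 1" unfolding x by (simp_all add: mult_less_cancel_left)
  then show False by simp
qed

lemma alcove_coords_not_dvd:
  fixes z :: "nat \<Rightarrow> int"
  assumes "alcove_coords P L z" "a < b" "b < 3"
  shows "\<not> P dvd z a - z b"
proof -
  have "(a = 0 \<and> b = 1) \<or> (a = 0 \<and> b = 2) \<or> (a = 1 \<and> b = 2)" using assms(2,3) by auto
  then show ?thesis
    using assms(1) not_dvd_if_between_multiples[of P 0] not_dvd_if_between_multiples[of P 1]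
    unfolding alcove_coords_def by (auto split: if_splits)
qed

lemma in_alc_imp_p_regular: "in_alc p f L (x :: int wt) \<Longrightarrow> p_regular p f x"
  unfolding p_regular_def in_alc_iff_alcove_coords by (auto dest: alcove_coords_not_dvd)

definition perm3 :: "nat \<Rightarrow> nat \<Rightarrow> nat \<Rightarrow> nat \<Rightarrow> nat" where
  "perm3 a b c = (\<lambda>j. if j = 0 then a else if j = 1 then b else if j = 2 then c else j)"

lemma perm3_permutes:
  assumes "{a, b, c} = {0, 1, 2}" "a \<noteq> b" "a \<noteq> c" "b \<noteq> c"
  shows "perm3 a b c permutes {0..<3}"
proof (rule bij_imp_permutes)
  have "perm3 a b c ` {0, 1, 2} = {a, b, c}" "inj_on (perm3 a b c) {0, 1, 2}"
    using assms(2-4) by (auto simp: perm3_def)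
  moreover have "{0..<3::nat} = {0, 1, 2}" by auto
  ultimately show "bij_betw (perm3 a b c) {0..<3} {0..<3}"
    using assms(1) unfolding bij_betw_def by simp
qed (auto simp: perm3_def)

lemma permutes_3_cases:
  fixes s :: "nat \<Rightarrow> nat"
  assumes "s permutes {0..<3}"
  shows "(s 0 = 0 \<and> s 1 = 1 \<and> s 2 = 2) \<or> (s 0 = 0 \<and> s 1 = 2 \<and> s 2 = 1) \<or>
         (s 0 = 1 \<and> s 1 = 0 \<and> s 2 = 2) \<or> (s 0 = 1 \<and> s 1 = 2 \<and> s 2 = 0) \<or>
         (s 0 = 2 \<and> s 1 = 0 \<and> s 2 = 1) \<or> (s 0 = 2 \<and> s 1 = 1 \<and> s 2 = 0)"
proof -
  have "s j < 3" if "j < 3" for j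
    using permutes_in_image[OF assms, of j] that by simp
  then have "s 0 < 3" "s 1 < 3" "s 2 < 3" by simp_all
  then have "s 0 = 0 \<or> s 0 = 1 \<or> s 0 = 2" "s 1 = 0 \<or> s 1 = 1 \<or> s 1 = 2"
    "s 2 = 0 \<or> s 2 = 1 \<or> s 2 = 2" by presburger+
  moreover have "s 0 \<noteq> s 1" "s 0 \<noteq> s 2" "s 1 \<noteq> s 2"
    using permutes_inj[OF assms] by (simp_all add: inj_eq)
  ultimately show ?thesis by (elim disjE) simp_all
qed

lemma permutes_3_eqI:
  assumes "s permutes {0..<3}" "t permutes {0..<3}" "\<And>j. j < 3 \<Longrightarrow> s j = t j"
  shows "s = t"
proof
  fix j show "s j = t j"
    using assms permutes_not_in[OF assms(1)] permutes_not_in[OF assms(2)] by (cases "j < 3") auto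
qed

lemma sum3_permutes:
  fixes g :: "nat \<Rightarrow> 'a::comm_monoid_add"
  assumes "s permutes {0..<3}"
  shows "g (s 0) + g (s 1) + g (s 2) = g 0 + g 1 + g 2"
  using permutes_3_cases[OF assms] by (elim disjE) (simp_all add: ac_simps)

section \<open>Affine Weyl group elements taking A to an alcove\<close>

text \<open>For a label L and r \<in> {0,1,2}, the pair (alc_trans L r, alc_perm L r) = (n, s) is the
  element t_n s of the extended affine Weyl group of SL_3 that maps A onto the alcove L under the
  p-dot action (t_n s . x)_j = p n_j + (x + eta)_(s j) - eta_j, with n in the class
  n_0 + n_1 = r (mod 3) of Lambda_W / Lambda_R.\<close>

definition alc_perm :: "alc \<Rightarrow> int \<Rightarrow> nat \<Rightarrow> nat" where
  "alc_perm L r =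
     (if L = AlcA then (if r = 0 then perm3 0 1 2 else if r = 1 then perm3 2 0 1 else perm3 1 2 0)
      else (if r = 0 then perm3 2 1 0 else if r = 1 then perm3 1 0 2 else perm3 0 2 1))"

definition alc_trans :: "alc \<Rightarrow> int \<Rightarrow> nat \<Rightarrow> int" where
  "alc_trans L r j =
     (if j = 0 then (if L = AlcA then (if r = 0 then 0 else 1) else (if r = 0 then 2 else 1))
      else if j = 1 then (if L = AlcA then (if r = 2 then 1 else 0) else (if r = 1 then 0 else 1))
      else 0)"

lemma alc_trans_class: "r \<in> {0, 1, 2} \<Longrightarrow> (alc_trans L r 0 + alc_trans L r 1) mod 3 = r"
  by (cases L) (auto simp: alc_trans_def)

lemma alc_perm_permutes: "alc_perm L r permutes {0..<3}"
  unfolding alc_perm_def by (auto intro!: perm3_permutes)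

lemma alcove_coords_alc_step:
  fixes z :: "nat \<Rightarrow> 'a::linordered_idom"
  assumes "r \<in> {0, 1, 2}" and "alcove_coords P AlcA z"
  shows "alcove_coords P L (\<lambda>j. P * of_int (alc_trans L r j) + z (alc_perm L r j))"
  using assms by (cases L) (auto simp: alcove_coords_def alc_trans_def alc_perm_def perm3_def)

lemma alcove_coords_alc_step_AlcA_iff:
  fixes z :: "nat \<Rightarrow> 'a::linordered_idom"
  assumes "r \<in> {0, 1, 2}"
  shows "alcove_coords P AlcA (\<lambda>j. P * of_int (alc_trans AlcA r j) + z (alc_perm AlcA r j))
     \<longleftrightarrow> alcove_coords P AlcA z"
  using assms alcove_coords_alc_step[OF assms]
  by (auto simp: alcove_coords_def alc_trans_def alc_perm_def perm3_def)

text \<open>The points (p/4) z - eta for these three z lie in A; their images determine an element of the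
  extended affine Weyl group that maps A into an alcove.\<close>

definition probe1 :: "nat \<Rightarrow> int" where "probe1 j = (if j = 0 then 2 else if j = 1 then 1 else 0)"
definition probe2 :: "nat \<Rightarrow> int" where "probe2 j = (if j = 0 then 3 else if j = 1 then 1 else 0)"
definition probe3 :: "nat \<Rightarrow> int" where "probe3 j = (if j = 0 then 3 else if j = 1 then 2 else 0)"

lemma alcove_coords_probe: "z \<in> {probe1, probe2, probe3} \<Longrightarrow> alcove_coords 4 AlcA z"
  by (auto simp: alcove_coords_def probe1_def probe2_def probe3_def)

lemma alc_step_unique:
  fixes n :: "nat \<Rightarrow> int"
  assumes s: "s permutes {0..<3}" and "n 2 = 0"
    and maps: "\<And>z. z \<in> {probe1, probe2, probe3} \<Longrightarrow> alcove_coords 4 L (\<lambda>j. 4 * n j + z (s j))"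
  defines "r \<equiv> (n 0 + n 1) mod 3"
  shows "(\<forall>j<3. n j = alc_trans L r j) \<and> s = alc_perm L r"
proof -
  have "n 0 = alc_trans L r 0 \<and> n 1 = alc_trans L r 1 \<and>
        s 0 = alc_perm L r 0 \<and> s 1 = alc_perm L r 1 \<and> s 2 = alc_perm L r 2"
    using permutes_3_cases[OF s] maps[of probe1] maps[of probe2] maps[of probe3] \<open>n 2 = 0\<close>
    unfolding r_def
    by (elim disjE conjE; cases L)
      (simp_all add: alcove_coords_def probe1_def probe2_def probe3_def alc_trans_def
        alc_perm_def perm3_def, presburger)
  then have "s j = alc_perm L r j" "n j = alc_trans L r j" if "j < 3" for j
    using that \<open>n 2 = 0\<close> by (auto simp: less_Suc_eq numeral_3_eq_3 numeral_2_eq_2 alc_trans_def)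
  then show ?thesis using permutes_3_eqI[OF s alc_perm_permutes] by blast
qed

lemma dot_coord:
  "i < f \<Longrightarrow> j < 3 \<Longrightarrow>
    dot p f \<nu> w x i j = of_int (int p * \<nu> i j) + x i (w i j) + eta f i (w i j) - eta f i j"
  by (simp add: dot_def wact_def wadd_def)

lemma wadd_dot_eta:
  "i < f \<Longrightarrow> j < 3 \<Longrightarrow>
    wadd (dot p f \<nu> w x) (eta f) i j = of_int (int p * \<nu> i j) + wadd x (eta f) i (w i j)"
  by (simp add: dot_def wadd_def wact_def)

lemma wf_dot: "wf f (dot p f \<nu> w x)"
  unfolding wf_def dot_def by auto

lemma Weyl_perm_lt: "w \<in> Weyl f \<Longrightarrow> i < f \<Longrightarrow> j < 3 \<Longrightarrow> w i j < 3"
  using permutes_in_image[of "w i" "{0..<3}" j] unfolding Weyl_def by auto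

lemma alcove_coords_dot_alc_step_iff:
  fixes x :: "'a::linordered_idom wt"
  assumes "i < f" "\<forall>j<3. \<nu> i j = alc_trans L r j" "w i = alc_perm L r"
  shows "alcove_coords (of_nat p) L' (wadd (dot p f \<nu> w x) (eta f) i) \<longleftrightarrow>
    alcove_coords (of_nat p) L'
      (\<lambda>j. of_nat p * of_int (alc_trans L r j) + wadd x (eta f) i (alc_perm L r j))"
  by (rule alcove_coords_cong) (simp add: wadd_dot_eta assms)

section \<open>Equality modulo X^0(T)\<close>

definition X0_equiv :: "nat \<Rightarrow> 'a::ring_1 wt \<Rightarrow> 'a wt \<Rightarrow> bool" where
  "X0_equiv f x y \<longleftrightarrow> (\<exists>c. \<forall>i<f. \<forall>j<3. x i j - y i j = c i)"

lemma X0_equivI: "(\<And>i j. i < f \<Longrightarrow> j < 3 \<Longrightarrow> x i j - y i j = c i) \<Longrightarrow> X0_equiv f x y"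
  unfolding X0_equiv_def by blast

lemma X0_equiv_refl: "X0_equiv f x x"
  by (rule X0_equivI[of f x x "\<lambda>_. 0"]) simp

lemma X0_equiv_sym:
  assumes "X0_equiv f x y"
  shows "X0_equiv f y x"
proof -
  obtain c where c: "\<And>i j. i < f \<Longrightarrow> j < 3 \<Longrightarrow> x i j - y i j = c i"
    using assms unfolding X0_equiv_def by blast
  show ?thesis
  proof (rule X0_equivI[of f y x "\<lambda>i. - c i"])
    fix i j :: nat assume "i < f" "j < 3"
    have "y i j - x i j = - (x i j - y i j)" by simp
    then show "y i j - x i j = - c i" using c[OF \<open>i < f\<close> \<open>j < 3\<close>] by simp
  qed
qed

lemma X0_equiv_trans [trans]:
  assumes "X0_equiv f x y" "X0_equiv f y z"
  shows "X0_equiv f x z"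
proof -
  obtain c where c: "\<And>i j. i < f \<Longrightarrow> j < 3 \<Longrightarrow> x i j - y i j = c i"
    using assms(1) unfolding X0_equiv_def by blast
  obtain d where d: "\<And>i j. i < f \<Longrightarrow> j < 3 \<Longrightarrow> y i j - z i j = d i"
    using assms(2) unfolding X0_equiv_def by blast
  show ?thesis
  proof (rule X0_equivI[of f x z "\<lambda>i. c i + d i"])
    fix i j :: nat assume "i < f" "j < 3"
    have "x i j - z i j = (x i j - y i j) + (y i j - z i j)" by simp
    then show "x i j - z i j = c i + d i" using c[OF \<open>i < f\<close> \<open>j < 3\<close>] d[OF \<open>i < f\<close> \<open>j < 3\<close>] by simp
  qed
qed

lemma X0_equiv_wadd:
  assumes "X0_equiv f x x'" "X0_equiv f y y'"
  shows "X0_equiv f (wadd x y) (wadd x' y')"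
proof -
  obtain c where c: "\<And>i j. i < f \<Longrightarrow> j < 3 \<Longrightarrow> x i j - x' i j = c i"
    using assms(1) unfolding X0_equiv_def by blast
  obtain d where d: "\<And>i j. i < f \<Longrightarrow> j < 3 \<Longrightarrow> y i j - y' i j = d i"
    using assms(2) unfolding X0_equiv_def by blast
  show ?thesis
    using c d by (intro X0_equivI[of f _ _ "\<lambda>i. c i + d i"]) (simp add: wadd_def add_diff_add)
qed

lemma X0_equiv_wsmul:
  assumes "X0_equiv f x y"
  shows "X0_equiv f (wsmul c x) (wsmul c y)"
proof -
  obtain d where "\<And>i j. i < f \<Longrightarrow> j < 3 \<Longrightarrow> x i j - y i j = d i"
    using assms unfolding X0_equiv_def by blast
  then show ?thesis
    by (intro X0_equivI[of f _ _ "\<lambda>i. of_int c * d i"])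
      (simp add: wsmul_def flip: right_diff_distrib)
qed

lemma X0_equiv_piInv:
  assumes "X0_equiv f x y"
  shows "X0_equiv f (piInv f x) (piInv f y)"
proof -
  obtain c where "\<And>i j. i < f \<Longrightarrow> j < 3 \<Longrightarrow> x i j - y i j = c i"
    using assms unfolding X0_equiv_def by blast
  then show ?thesis
    by (intro X0_equivI[of f _ _ "\<lambda>i. c ((i + 1) mod f)"]) (simp add: piInv_def)
qed

lemma X0_equiv_dot:
  assumes "X0_equiv f \<nu> \<nu>'" "X0_equiv f x y" "w \<in> Weyl f"
  shows "X0_equiv f (dot p f \<nu> w x) (dot p f \<nu>' w y)"
proof -
  obtain c where c: "\<And>i j. i < f \<Longrightarrow> j < 3 \<Longrightarrow> \<nu> i j - \<nu>' i j = c i"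
    using assms(1) unfolding X0_equiv_def by blast
  obtain d where d: "\<And>i j. i < f \<Longrightarrow> j < 3 \<Longrightarrow> x i j - y i j = d i"
    using assms(2) unfolding X0_equiv_def by blast
  have "dot p f \<nu> w x i j - dot p f \<nu>' w y i j = of_int (int p * c i) + d i"
    if "i < f" "j < 3" for i j
  proof -
    have "x i (w i j) - y i (w i j) = d i" using d[OF that(1) Weyl_perm_lt[OF assms(3) that]] .
    moreover have "\<nu> i j = \<nu>' i j + c i" using c[OF that] by simp
    ultimately show ?thesis using that by (simp add: dot_def wact_def wadd_def algebra_simps)
  qed
  then show ?thesis by (rule X0_equivI)
qed

lemma X0_equiv_can: "X0_equiv f (can f \<nu>) \<nu>"
  by (rule X0_equivI[of f _ _ "\<lambda>i. - ((\<nu> i 0 + \<nu> i 1 + \<nu> i 2) div 3)"]) (simp add: can_def)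

lemma X0_equiv_bar: "X0_equiv f (bar f x) x"
  unfolding X0_equiv_def bar_def by auto

lemma X0_equiv_section:
  assumes "is_section f sec" "\<omega> \<in> LW f"
  shows "X0_equiv f (sec \<omega>) \<omega>"
  using assms X0_equiv_sym[OF X0_equiv_bar[of f "sec \<omega>"]] unfolding is_section_def by auto

lemma in_alc_X0_equiv_iff:
  assumes "X0_equiv f x y"
  shows "in_alc p f L x \<longleftrightarrow> in_alc p f L y"
proof -
  obtain c where c: "\<And>i j. i < f \<Longrightarrow> j < 3 \<Longrightarrow> x i j - y i j = c i"
    using assms unfolding X0_equiv_def by blast
  have "alcove_coords (of_nat p) (L i) (wadd x (eta f) i) \<longleftrightarrow>
        alcove_coords (of_nat p) (L i) (\<lambda>j. wadd y (eta f) i j + c i)" if "i < f" for i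
    using c[OF that] by (intro alcove_coords_cong) (simp add: wadd_def algebra_simps)
  then show ?thesis unfolding in_alc_iff_alcove_coords by (simp add: alcove_coords_shift)
qed

lemma bar_eq_if_X0_equiv:
  assumes "X0_equiv f x y"
  shows "bar f x = bar f y"
proof -
  obtain c where c: "\<And>i j. i < f \<Longrightarrow> j < 3 \<Longrightarrow> x i j - y i j = c i"
    using assms unfolding X0_equiv_def by blast
  show ?thesis
  proof (intro ext)
    fix i j
    show "bar f x i j = bar f y i j"
    proof (cases "i < f \<and> j < 3")
      case True
      then have "x i j - y i j = c i" "x i 2 - y i 2 = c i" using c by simp_all
      then have "x i j - x i 2 = y i j - y i 2" by (simp add: algebra_simps)
      then show ?thesis using True by (simp add: bar_def)
    qed (auto simp: bar_def)
  qed
qed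

lemma cong_ppi_imp_X0_equiv:
  assumes "cong_ppi p f x y"
  shows "X0_equiv f x y"
proof -
  obtain c where c: "c \<in> X0 f" and xy: "wsub x y = wsub (wsmul (int p) c) (piF f c)"
    using assms unfolding cong_ppi_def by blast
  have "x i j - y i j = int p * c i 0 - c ((i + f - 1) mod f) 0" if "i < f" "j < 3" for i j
  proof -
    have "c k 0 = c k 1" "c k 1 = c k 2" for k using c unfolding X0_def by auto
    moreover have "j = 0 \<or> j = 1 \<or> j = 2" using \<open>j < 3\<close> by auto
    moreover have "x i j - y i j = int p * c i j - c ((i + f - 1) mod f) j"
      using fun_cong[OF fun_cong[OF xy, of i], of j] \<open>i < f\<close>
      by (simp add: wsub_def wsmul_def piF_def)
    ultimately show ?thesis by auto
  qed
  then show ?thesis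
    unfolding X0_equiv_def by (intro exI[of _ "\<lambda>i. int p * c i 0 - c ((i + f - 1) mod f) 0"]) blast
qed

lemma cong_ppi_refl: "cong_ppi p f x x"
proof -
  have "(\<lambda>_ _. 0) \<in> X0 f" unfolding X0_def wf_def by simp
  moreover have "wsub x x = wsub (wsmul (int p) (\<lambda>_ _. 0)) (piF f (\<lambda>_ _. 0))"
    by (simp add: wsub_def wsmul_def piF_def fun_eq_iff)
  ultimately show ?thesis unfolding cong_ppi_def by blast
qed

lemma resZ_wadd [simp]: "resZ f (wadd x y) i = resZ f x i + resZ f y i"
  by (simp add: resZ_def wadd_def)

lemma resZ_wsub [simp]: "resZ f (wsub x y) i = resZ f x i - resZ f y i"
  by (simp add: resZ_def wsub_def)

lemma resZ_wsmul [simp]: "resZ f (wsmul c x) i = c * resZ f x i"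
  by (simp add: resZ_def wsmul_def algebra_simps)

lemma resZ_eta [simp]: "resZ f (eta f) i = 0"
  by (simp add: resZ_def eta_def)

lemma resZ_wadd_eta: "resZ f (wadd x (eta f)) = resZ f x"
  by (simp add: fun_eq_iff)

lemma resZ_piInv: "i < f \<Longrightarrow> resZ f (piInv f x) i = resZ f x ((i + 1) mod f)"
  by (simp add: resZ_def piInv_def)

lemma resZ_can: "\<nu> \<in> LR f \<Longrightarrow> resZ f (can f \<nu>) i = 0"
  by (auto simp: resZ_def can_def LR_def)

lemma resZ_dot:
  assumes "w \<in> Weyl f"
  shows "resZ f (dot p f \<nu> w x) i = int p * resZ f \<nu> i + resZ f x i"
proof (cases "i < f")
  case True
  then have "w i permutes {0..<3}" using assms unfolding Weyl_def by auto
  from sum3_permutes[OF this, of "wadd x (eta f) i"] True show ?thesis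
    by (simp add: resZ_def dot_def wact_def algebra_simps eta_def wadd_def)
qed (simp add: resZ_def)

lemma bar_mem_LR_if_sum_zero:
  assumes "\<And>i. i < f \<Longrightarrow> q i 0 + q i 1 + q i 2 = 0"
  shows "bar f q \<in> LR f"
proof -
  have "bar f q i 0 + bar f q i 1 + bar f q i 2 = 3 * (- q i 2)" if "i < f" for i
    using assms[OF that] that by (simp add: bar_def; linarith)
  moreover have "bar f q \<in> LW f" unfolding LW_def wf_def by (auto simp: bar_def)
  ultimately show ?thesis unfolding LR_def by auto
qed

lemma can_bar_if_sum_zero:
  assumes "wf f q" "\<And>i. i < f \<Longrightarrow> q i 0 + q i 1 + q i 2 = 0"
  shows "can f (bar f q) = q"
proof (intro ext)
  fix i j
  show "can f (bar f q) i j = q i j"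
  proof (cases "i < f \<and> j < 3")
    case True
    then have "bar f q i 0 + bar f q i 1 + bar f q i 2 = - 3 * q i 2"
      using assms(2)[of i] by (simp add: bar_def)
    then show ?thesis using True by (simp add: can_def bar_def)
  qed (use assms(1) in \<open>auto simp: can_def wf_def\<close>)
qed

section \<open>The decomposition of Lambda_W \<times> calA\<close>

lemma mod_pred_Suc_mod: "i < f \<Longrightarrow> ((i + f - 1) mod f + 1) mod f = (i :: nat)"
  by (cases i) (simp_all add: mod_Suc_eq)

text \<open>The decomposition (omega', a) = (omega + nu, pi w t_(-pi^(-1) omega) . A): in component k the
  translation -omega_k and the permutation w_(k-1) are the table entries for the label a_k and the
  class of -omega'_k in Lambda_W / Lambda_R.\<close>

definition decomp_class :: "int wt \<Rightarrow> nat \<Rightarrow> int" where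
  "decomp_class \<omega>' k = (- (\<omega>' k 0 + \<omega>' k 1)) mod 3"

definition decomp_omega :: "nat \<Rightarrow> (nat \<Rightarrow> alc) \<Rightarrow> int wt \<Rightarrow> int wt" where
  "decomp_omega f a \<omega>' =
     (\<lambda>k j. if k < f \<and> j < 2 then - alc_trans (a k) (decomp_class \<omega>' k) j else 0)"

definition decomp_perm :: "nat \<Rightarrow> (nat \<Rightarrow> alc) \<Rightarrow> int wt \<Rightarrow> nat \<Rightarrow> nat \<Rightarrow> nat" where
  "decomp_perm f a \<omega>' =
     (\<lambda>i. if i < f then alc_perm (a ((i + 1) mod f)) (decomp_class \<omega>' ((i + 1) mod f)) else id)"

definition decomp_nu :: "nat \<Rightarrow> (nat \<Rightarrow> alc) \<Rightarrow> int wt \<Rightarrow> int wt" where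
  "decomp_nu f a \<omega>' = wsub \<omega>' (decomp_omega f a \<omega>')"

lemma decomp_class_range: "decomp_class \<omega>' k \<in> {0, 1, 2}"
  unfolding decomp_class_def by auto

lemma decomp_omega_LW: "decomp_omega f a \<omega>' \<in> LW f"
  unfolding LW_def wf_def decomp_omega_def by auto

lemma decomp_perm_Weyl: "decomp_perm f a \<omega>' \<in> Weyl f"
  unfolding Weyl_def decomp_perm_def by (auto intro: alc_perm_permutes)

lemma decomp_nu_LR:
  assumes "\<omega>' \<in> LW f"
  shows "decomp_nu f a \<omega>' \<in> LR f"
proof -
  have \<omega>': "wf f \<omega>'" "\<And>i. \<omega>' i 2 = 0" using assms unfolding LW_def by auto
  have "3 dvd (decomp_nu f a \<omega>' i 0 + decomp_nu f a \<omega>' i 1 + decomp_nu f a \<omega>' i 2)" if "i < f" for i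
  proof -
    let ?r = "decomp_class \<omega>' i"
    have "decomp_nu f a \<omega>' i 0 + decomp_nu f a \<omega>' i 1 + decomp_nu f a \<omega>' i 2
        = \<omega>' i 0 + \<omega>' i 1 + (alc_trans (a i) ?r 0 + alc_trans (a i) ?r 1)"
      using that \<omega>'(2)[of i] by (simp add: decomp_nu_def wsub_def decomp_omega_def)
    then show ?thesis
      using alc_trans_class[OF decomp_class_range, of "a i" \<omega>' i] unfolding decomp_class_def
      by presburger
  qed
  moreover have "decomp_nu f a \<omega>' \<in> LW f"
    using \<omega>' unfolding LW_def wf_def decomp_nu_def wsub_def decomp_omega_def by auto
  ultimately show ?thesis unfolding LR_def by auto
qed

lemma neg_piInv_decomp_omega:
  "i < f \<Longrightarrow> j < 3 \<Longrightarrow> wsmul (-1) (piInv f (decomp_omega f a \<omega>')) i j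
     = alc_trans (a ((i + 1) mod f)) (decomp_class \<omega>' ((i + 1) mod f)) j"
  by (auto simp: wsmul_def piInv_def decomp_omega_def alc_trans_def)

lemma neg_piInv_decomp_omega_LW: "wsmul (-1) (piInv f (decomp_omega f a \<omega>')) \<in> LW f"
  unfolding LW_def wf_def wsmul_def piInv_def decomp_omega_def by auto

lemma alcove_coords_dot_decomp_iff:
  fixes x :: "'a::linordered_idom wt" and a :: "nat \<Rightarrow> alc" and \<omega>' :: "int wt"
  assumes "i < f"
  defines "L \<equiv> a ((i + 1) mod f)" and "r \<equiv> decomp_class \<omega>' ((i + 1) mod f)"
  shows "alcove_coords (of_nat p) L' (wadd (dot p f (wsmul (-1) (piInv f (decomp_omega f a \<omega>')))
      (decomp_perm f a \<omega>') x) (eta f) i) \<longleftrightarrow>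
    alcove_coords (of_nat p) L'
      (\<lambda>j. of_nat p * of_int (alc_trans L r j) + wadd x (eta f) i (alc_perm L r j))"
  using assms
  by (intro alcove_coords_dot_alc_step_iff) (simp_all add: neg_piInv_decomp_omega decomp_perm_def)

lemma in_alc_dot_decomp:
  fixes x :: "'a::linordered_idom wt"
  assumes "in_alc p f (\<lambda>_. AlcA) x"
  shows "in_alc p f (alc_piInv f a)
    (dot p f (wsmul (-1) (piInv f (decomp_omega f a \<omega>'))) (decomp_perm f a \<omega>') x)"
  unfolding in_alc_iff_alcove_coords
proof (intro allI impI)
  fix i assume "i < f"
  then show "alcove_coords (of_nat p) (alc_piInv f a i) (wadd (dot p f (wsmul (-1)
      (piInv f (decomp_omega f a \<omega>'))) (decomp_perm f a \<omega>') x) (eta f) i)"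
    using assms unfolding in_alc_iff_alcove_coords alcove_coords_dot_decomp_iff[OF \<open>i < f\<close>]
    by (simp add: alc_piInv_def alcove_coords_alc_step[OF decomp_class_range])
qed

lemma in_alc_dot_decomp_AlcA_iff:
  fixes x :: "'a::linordered_idom wt"
  shows "in_alc p f (\<lambda>_. AlcA)
      (dot p f (wsmul (-1) (piInv f (decomp_omega f (\<lambda>_. AlcA) \<omega>')))
        (decomp_perm f (\<lambda>_. AlcA) \<omega>') x)
    \<longleftrightarrow> in_alc p f (\<lambda>_. AlcA) x"
  unfolding in_alc_iff_alcove_coords
  by (simp add: alcove_coords_dot_decomp_iff alcove_coords_alc_step_AlcA_iff[OF decomp_class_range]
      cong: conj_cong imp_cong)

lemma is_decomp_decomp:
  assumes "\<omega>' \<in> LW f"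
  shows "is_decomp p f \<omega>' a (decomp_omega f a \<omega>') (decomp_nu f a \<omega>') (decomp_perm f a \<omega>')"
proof -
  have "alc_piInv f a \<in> calA f" unfolding calA_def alc_piInv_def by auto
  then have "(decomp_omega f a \<omega>', decomp_perm f a \<omega>') \<in> W1plus p f"
    unfolding W1plus_def using decomp_omega_LW decomp_perm_Weyl in_alc_dot_decomp by blast
  moreover have "\<omega>' = wadd (decomp_omega f a \<omega>') (decomp_nu f a \<omega>')"
    by (simp add: wadd_def decomp_nu_def wsub_def)
  ultimately show ?thesis
    unfolding is_decomp_def using decomp_nu_LR[OF assms] in_alc_dot_decomp by blast
qed

definition probe_pt :: "nat \<Rightarrow> nat \<Rightarrow> (nat \<Rightarrow> int) \<Rightarrow> real wt" where
  "probe_pt p f z = (\<lambda>i j. if i < f \<and> j < 3 then real p / 4 * of_int (z j) - eta f i j else 0)"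

lemma wf_probe_pt: "wf f (probe_pt p f z)"
  unfolding wf_def probe_pt_def by auto

lemma wadd_probe_pt_eta:
  "i < f \<Longrightarrow> j < 3 \<Longrightarrow> wadd (probe_pt p f z) (eta f) i j = real p / 4 * of_int (z j)"
  unfolding probe_pt_def wadd_def by simp

lemma alcove_coords_real_probe_iff:
  assumes "0 < p"
  shows "alcove_coords (real p) L (\<lambda>j. real p / 4 * of_int (z j)) \<longleftrightarrow> alcove_coords 4 L z"
proof -
  have "alcove_coords (real p) L (\<lambda>j. real p / 4 * of_int (z j))
      \<longleftrightarrow> alcove_coords (real p / 4 * of_int 4) L (\<lambda>j. real p / 4 * of_int (z j))"
    by simp
  also have "\<dots> \<longleftrightarrow> alcove_coords 4 L z"
    using assms by (simp only: alcove_coords_scale alcove_coords_of_int)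
  finally show ?thesis .
qed

lemma in_alc_probe_pt:
  assumes "0 < p" "z \<in> {probe1, probe2, probe3}"
  shows "in_alc p f (\<lambda>_. AlcA) (probe_pt p f z)"
  unfolding in_alc_iff_alcove_coords
proof (intro allI impI)
  fix i assume "i < f"
  then have "alcove_coords (real p) AlcA (wadd (probe_pt p f z) (eta f) i)
      \<longleftrightarrow> alcove_coords (real p) AlcA (\<lambda>j. real p / 4 * of_int (z j))"
    by (intro alcove_coords_cong) (simp add: wadd_probe_pt_eta)
  then show "alcove_coords (of_nat p) AlcA (wadd (probe_pt p f z) (eta f) i)"
    using alcove_coords_real_probe_iff[OF assms(1)] alcove_coords_probe[OF assms(2)] by simp
qed

lemma alcove_coords_dot_probe_pt:
  assumes "0 < p" "i < f" "w i permutes {0..<3}" "in_alc p f L (dot p f \<nu> w (probe_pt p f z))"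
  shows "alcove_coords 4 (L i) (\<lambda>j. 4 * \<nu> i j + z (w i j))"
proof -
  have "w i j < 3" if "j < 3" for j
    using permutes_in_image[OF assms(3), of j] that by simp
  then have "alcove_coords (real p) (L i) (wadd (dot p f \<nu> w (probe_pt p f z)) (eta f) i)
      \<longleftrightarrow> alcove_coords (real p) (L i) (\<lambda>j. real p / 4 * of_int (4 * \<nu> i j + z (w i j)))"
    using assms(2)
    by (intro alcove_coords_cong) (simp add: wadd_dot_eta wadd_probe_pt_eta algebra_simps)
  also have "\<dots> \<longleftrightarrow> alcove_coords 4 (L i) (\<lambda>j. 4 * \<nu> i j + z (w i j))"
    by (rule alcove_coords_real_probe_iff[OF assms(1)])
  finally show ?thesis
    using assms(2,4) unfolding in_alc_iff_alcove_coords by simp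
qed

lemma is_decomp_component:
  assumes d: "is_decomp p f \<omega>' a \<omega> \<nu> w" and "0 < p" and i: "i < f"
  defines "k \<equiv> (i + 1) mod f"
  shows "(\<forall>j<3. wsmul (-1) (piInv f \<omega>) i j = alc_trans (a k) (decomp_class \<omega>' k) j)
       \<and> w i = alc_perm (a k) (decomp_class \<omega>' k)"
proof -
  from d have \<nu>: "\<nu> \<in> LR f" and \<omega>': "\<omega>' = wadd \<omega> \<nu>" and W1: "(\<omega>, w) \<in> W1plus p f"
    and maps: "\<And>x::real wt. wf f x \<Longrightarrow> in_alc p f (\<lambda>_. AlcA) x \<Longrightarrow>
          in_alc p f (alc_piInv f a) (dot p f (wsmul (-1) (piInv f \<omega>)) w x)"
    unfolding is_decomp_def by auto
  from W1 have \<omega>: "\<omega> \<in> LW f" and w: "w \<in> Weyl f" unfolding W1plus_def by auto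
  have k: "k < f" unfolding k_def using i by simp
  define n where "n j = wsmul (-1) (piInv f \<omega>) i j" for j
  have n: "n j = - \<omega> k j" for j unfolding n_def k_def wsmul_def piInv_def using i by simp
  have "n 2 = 0" using \<omega> unfolding n LW_def by simp
  have s: "w i permutes {0..<3}" using w i unfolding Weyl_def by auto
  have probes: "alcove_coords 4 (a k) (\<lambda>j. 4 * n j + z (w i j))"
    if "z \<in> {probe1, probe2, probe3}" for z
    using alcove_coords_dot_probe_pt[OF \<open>0 < p\<close> i s
        maps[OF wf_probe_pt in_alc_probe_pt[OF \<open>0 < p\<close> that]]]
    by (simp add: n_def alc_piInv_def i k_def)
  have cls: "(n 0 + n 1) mod 3 = decomp_class \<omega>' k"
  proof -
    have "3 dvd (\<nu> k 0 + \<nu> k 1 + \<nu> k 2)" "\<nu> k 2 = 0" using \<nu> k unfolding LR_def LW_def by auto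
    moreover have "\<omega>' k 0 = \<omega> k 0 + \<nu> k 0" "\<omega>' k 1 = \<omega> k 1 + \<nu> k 1"
      using \<omega>' by (simp_all add: wadd_def)
    ultimately show ?thesis unfolding decomp_class_def n by presburger
  qed
  have "(\<forall>j<3. n j = alc_trans (a k) (decomp_class \<omega>' k) j)
      \<and> w i = alc_perm (a k) (decomp_class \<omega>' k)"
    using alc_step_unique[OF s \<open>n 2 = 0\<close> probes] unfolding cls .
  then show ?thesis unfolding n_def .
qed

lemma is_decomp_unique:
  assumes d: "is_decomp p f \<omega>' a \<omega> \<nu> w" and "0 < p"
  shows "\<omega> = decomp_omega f a \<omega>' \<and> \<nu> = decomp_nu f a \<omega>' \<and> w = decomp_perm f a \<omega>'"
proof -
  from d have \<omega>': "\<omega>' = wadd \<omega> \<nu>" and \<omega>: "\<omega> \<in> LW f" and w: "w \<in> Weyl f"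
    unfolding is_decomp_def W1plus_def by auto
  have \<omega>_eq: "\<omega> = decomp_omega f a \<omega>'"
  proof (intro ext)
    fix k j
    show "\<omega> k j = decomp_omega f a \<omega>' k j"
    proof (cases "k < f \<and> j < 2")
      case True
      define i where "i = (k + f - 1) mod f"
      have i: "i < f" "(i + 1) mod f = k"
        using True mod_pred_Suc_mod[of k f] by (simp_all add: i_def)
      have "wsmul (-1) (piInv f \<omega>) i j = alc_trans (a k) (decomp_class \<omega>' k) j"
        using is_decomp_component[OF d \<open>0 < p\<close> i(1)] True unfolding i(2) by simp
      then show ?thesis using True i by (simp add: wsmul_def piInv_def decomp_omega_def)
    next
      case False
      then have "f \<le> k \<or> 3 \<le> j \<or> j = 2" by auto
      then show ?thesis using \<omega> False by (auto simp: decomp_omega_def LW_def wf_def)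
    qed
  qed
  moreover have "w = decomp_perm f a \<omega>'"
  proof (intro ext)
    fix i j
    show "w i j = decomp_perm f a \<omega>' i j"
      using is_decomp_component[OF d \<open>0 < p\<close>, of i] w
      by (cases "i < f") (auto simp: decomp_perm_def Weyl_def)
  qed
  moreover have "\<nu> = decomp_nu f a \<omega>'"
    using \<omega>' unfolding decomp_nu_def \<omega>_eq[symmetric] by (auto simp: wsub_def wadd_def)
  ultimately show ?thesis by blast
qed

lemma decomp_eq:
  assumes "0 < p" "\<omega>' \<in> LW f"
  shows "decomp p f \<omega>' a = (decomp_omega f a \<omega>', decomp_nu f a \<omega>', decomp_perm f a \<omega>')"
  unfolding decomp_def
proof (rule the_equality)
  show "case (decomp_omega f a \<omega>', decomp_nu f a \<omega>', decomp_perm f a \<omega>') of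
      (\<omega>, \<nu>, w) \<Rightarrow> is_decomp p f \<omega>' a \<omega> \<nu> w"
    using is_decomp_decomp[OF assms(2)] by simp
  fix t assume "case t of (\<omega>, \<nu>, w) \<Rightarrow> is_decomp p f \<omega>' a \<omega> \<nu> w"
  then show "t = (decomp_omega f a \<omega>', decomp_nu f a \<omega>', decomp_perm f a \<omega>')"
    using is_decomp_unique[OF _ assms(1)] by (cases t) auto
qed

section \<open>Trns\<close>

text \<open>The translation part of the affine Weyl group element of part 2: pi^(-1) can(nu) moved
  through decomp_perm, plus the amount by which decomp_perm moves pi^(-1) sec(omega).\<close>

definition trns_affine_trans :: "nat \<Rightarrow> (int wt \<Rightarrow> int wt) \<Rightarrow> (nat \<Rightarrow> alc) \<Rightarrow> int wt \<Rightarrow> int wt" where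
  "trns_affine_trans f sec a \<omega>' = (\<lambda>i j. if i < f \<and> j < 3 then
     sec (decomp_omega f a \<omega>') ((i + 1) mod f) (decomp_perm f a \<omega>' i j)
       - sec (decomp_omega f a \<omega>') ((i + 1) mod f) j
       + can f (decomp_nu f a \<omega>') ((i + 1) mod f) (decomp_perm f a \<omega>' i j)
     else 0)"

lemma wf_trns_affine_trans: "wf f (trns_affine_trans f sec a \<omega>')"
  unfolding trns_affine_trans_def wf_def by auto

lemma trns_affine_trans_sum_zero:
  assumes "\<omega>' \<in> LW f" "i < f"
  shows "trns_affine_trans f sec a \<omega>' i 0 + trns_affine_trans f sec a \<omega>' i 1
    + trns_affine_trans f sec a \<omega>' i 2 = 0"
proof -
  let ?k = "(i + 1) mod f"
  have "decomp_perm f a \<omega>' i permutes {0..<3}"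
    using decomp_perm_Weyl assms(2) unfolding Weyl_def by auto
  from sum3_permutes[OF this, of "sec (decomp_omega f a \<omega>') ?k"]
    sum3_permutes[OF this, of "can f (decomp_nu f a \<omega>') ?k"]
  show ?thesis
    using assms(2) resZ_can[OF decomp_nu_LR[OF assms(1)], of a ?k]
    by (simp add: trns_affine_trans_def resZ_def)
qed

context
  fixes p f :: nat and \<mu> :: "int wt" and sec :: "int wt \<Rightarrow> int wt"
    and \<omega>' :: "int wt" and a :: "nat \<Rightarrow> alc"
  assumes p: "0 < p" and sec: "is_section f sec" and \<omega>'_LW: "\<omega>' \<in> LW f"
begin

lemma Trns'_eq:
  "Trns' p f sec \<mu> \<omega>' a =
     dot p f (wsmul (-1) (piInv f (sec (decomp_omega f a \<omega>')))) (decomp_perm f a \<omega>')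
     (wadd (wadd (wsub \<mu> (eta f)) (can f (decomp_nu f a \<omega>'))) (sec (decomp_omega f a \<omega>')))"
  unfolding Trns'_def decomp_eq[OF p \<omega>'_LW] by simp

lemma wf_Trns': "wf f (Trns' p f sec \<mu> \<omega>' a)"
  unfolding Trns'_eq by (rule wf_dot)

lemma Trns'_coord:
  assumes "i < f" "j < 3"
  defines "k \<equiv> (i + 1) mod f" and "m \<equiv> decomp_perm f a \<omega>' i j"
  shows "Trns' p f sec \<mu> \<omega>' a i j = - int p * sec (decomp_omega f a \<omega>') k j + wsub \<mu> (eta f) i m
    + can f (decomp_nu f a \<omega>') i m + sec (decomp_omega f a \<omega>') i m + eta f i m - eta f i j"
  using assms unfolding Trns'_eq by (simp add: dot_coord wsmul_def piInv_def wadd_def)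

text \<open>The section and can only move weights within their X^0(T)-cosets, and the dot action
  respects these cosets.\<close>

lemma X0_equiv_Trns'_dot:
  "X0_equiv f (Trns' p f sec \<mu> \<omega>' a)
     (dot p f (wsmul (-1) (piInv f (decomp_omega f a \<omega>'))) (decomp_perm f a \<omega>')
        (wadd \<omega>' (bar f (wsub \<mu> (eta f)))))"
proof -
  let ?\<omega> = "decomp_omega f a \<omega>'" and ?\<nu> = "decomp_nu f a \<omega>'"
  have "X0_equiv f (wadd (wadd (wsub \<mu> (eta f)) (can f ?\<nu>)) (sec ?\<omega>))
      (wadd (wadd (wsub \<mu> (eta f)) ?\<nu>) ?\<omega>)"
    by (intro X0_equiv_wadd X0_equiv_refl X0_equiv_can X0_equiv_section[OF sec decomp_omega_LW])
  also have "wadd (wadd (wsub \<mu> (eta f)) ?\<nu>) ?\<omega> = wadd \<omega>' (wsub \<mu> (eta f))"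
    by (simp add: wadd_def decomp_nu_def wsub_def fun_eq_iff algebra_simps)
  also have "X0_equiv f \<dots> (wadd \<omega>' (bar f (wsub \<mu> (eta f))))"
    by (intro X0_equiv_wadd X0_equiv_refl X0_equiv_sym[OF X0_equiv_bar])
  finally show ?thesis
    unfolding Trns'_eq
    by (intro X0_equiv_dot X0_equiv_wsmul X0_equiv_piInv decomp_perm_Weyl
        X0_equiv_section[OF sec decomp_omega_LW])
qed

lemma in_alc_Trns':
  assumes "\<omega>' \<in> LWmu p f \<mu>"
  shows "in_alc p f (alc_piInv f a) (Trns' p f sec \<mu> \<omega>' a)"
proof -
  have "in_alc p f (\<lambda>_. AlcA) (wadd \<omega>' (bar f (wsub \<mu> (eta f))))"
    using assms unfolding LWmu_def by simp
  then show ?thesis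
    using in_alc_dot_decomp in_alc_X0_equiv_iff[OF X0_equiv_Trns'_dot] by blast
qed

lemma in_alc_bar_Trns':
  "\<omega>' \<in> LWmu p f \<mu> \<Longrightarrow> in_alc p f (alc_piInv f a) (bar f (Trns' p f sec \<mu> \<omega>' a))"
  using in_alc_Trns' in_alc_X0_equiv_iff[OF X0_equiv_bar] by blast

lemma bar_Trns'_eq:
  "bar f (Trns' p f sec \<mu> \<omega>' a)
     = bar f (dot p f (wsmul (-1) (piInv f (decomp_omega f a \<omega>'))) (decomp_perm f a \<omega>')
          (wadd \<omega>' (bar f (wsub \<mu> (eta f)))))"
  by (rule bar_eq_if_X0_equiv[OF X0_equiv_Trns'_dot])

lemma LWmu_if_in_alc_Trns':
  assumes "a = (\<lambda>_. AlcA)" "in_alc p f (\<lambda>_. AlcA) (Trns' p f sec \<mu> \<omega>' a)"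
  shows "\<omega>' \<in> LWmu p f \<mu>"
proof -
  have "in_alc p f (\<lambda>_. AlcA)
      (dot p f (wsmul (-1) (piInv f (decomp_omega f a \<omega>'))) (decomp_perm f a \<omega>')
        (wadd \<omega>' (bar f (wsub \<mu> (eta f)))))"
    using assms(2) in_alc_X0_equiv_iff[OF X0_equiv_Trns'_dot] by blast
  then have "in_alc p f (\<lambda>_. AlcA) (wadd \<omega>' (bar f (wsub \<mu> (eta f))))"
    unfolding assms(1) by (simp only: in_alc_dot_decomp_AlcA_iff)
  then show ?thesis using \<omega>'_LW unfolding LWmu_def by simp
qed

lemma resZ_Trns'_minus:
  assumes "i < f"
  shows "resZ f (wsub (Trns' p f sec \<mu> \<omega>' a) \<mu>) i
    = resZ f (sec (decomp_omega f a \<omega>')) i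
      - int p * resZ f (sec (decomp_omega f a \<omega>')) ((i + 1) mod f)"
  using assms unfolding Trns'_eq
  by (simp add: resZ_dot[OF decomp_perm_Weyl] resZ_piInv resZ_can[OF decomp_nu_LR[OF \<omega>'_LW]])

lemma resZ_Trns'_in_p_minus_pi:
  "\<exists>z. (\<forall>i\<ge>f. z i = 0) \<and> resZ f (wsub (Trns' p f sec \<mu> \<omega>' a) \<mu>) = (\<lambda>i. int p * z i - piZ f z i)"
proof (intro exI conjI)
  define z where
    "z i = (if i < f then - resZ f (sec (decomp_omega f a \<omega>')) ((i + 1) mod f) else 0)" for i
  show "\<forall>i\<ge>f. z i = 0" by (simp add: z_def)
  show "resZ f (wsub (Trns' p f sec \<mu> \<omega>' a) \<mu>) = (\<lambda>i. int p * z i - piZ f z i)"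
  proof
    fix i
    show "resZ f (wsub (Trns' p f sec \<mu> \<omega>' a) \<mu>) i = int p * z i - piZ f z i"
    proof (cases "i < f")
      case True
      then have "piZ f z i = - resZ f (sec (decomp_omega f a \<omega>')) i"
        using mod_pred_Suc_mod[of i f] by (simp add: piZ_def z_def)
      then show ?thesis using resZ_Trns'_minus[OF True] True by (simp add: z_def)
    qed (simp add: resZ_def piZ_def z_def)
  qed
qed

lemma X0_equiv_section_change:
  "X0_equiv f (sec \<omega>') (wadd (sec (decomp_omega f a \<omega>')) (can f (decomp_nu f a \<omega>')))"
proof -
  have "X0_equiv f (sec \<omega>') (wadd (decomp_omega f a \<omega>') (decomp_nu f a \<omega>'))"
    using X0_equiv_section[OF sec \<omega>'_LW] by (simp add: wadd_def decomp_nu_def wsub_def)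
  also have "X0_equiv f \<dots> (wadd (sec (decomp_omega f a \<omega>')) (can f (decomp_nu f a \<omega>')))"
    by (intro X0_equiv_wadd X0_equiv_sym[OF X0_equiv_can]
        X0_equiv_sym[OF X0_equiv_section[OF sec decomp_omega_LW]])
  finally show ?thesis .
qed

lemma Trns'_minus_dot_trns_affine_trans:
  assumes "i < f" "j < 3"
  defines "c \<equiv> \<lambda>i. sec \<omega>' i 0 - (sec (decomp_omega f a \<omega>') i 0 + can f (decomp_nu f a \<omega>') i 0)"
  shows "Trns' p f sec \<mu> \<omega>' a i j
      - dot p f (trns_affine_trans f sec a \<omega>') (decomp_perm f a \<omega>')
          (wadd (wsub \<mu> (eta f)) (wsub (sec \<omega>') (wsmul (int p) (piInv f (sec \<omega>'))))) i j
    = int p * c ((i + 1) mod f) - c i"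
proof -
  let ?S = "sec (decomp_omega f a \<omega>')" and ?S' = "sec \<omega>'" and ?C = "can f (decomp_nu f a \<omega>')"
  let ?k = "(i + 1) mod f" and ?m = "decomp_perm f a \<omega>' i j"
  obtain c' where c': "\<And>i j. i < f \<Longrightarrow> j < 3 \<Longrightarrow> ?S' i j - (?S i j + ?C i j) = c' i"
    using X0_equiv_section_change unfolding X0_equiv_def wadd_def by blast
  have "?k < f" "?m < 3" using assms(1,2) Weyl_perm_lt[OF decomp_perm_Weyl] by auto
  then have "c i = ?S' i ?m - (?S i ?m + ?C i ?m)"
    "int p * c ?k = int p * ?S' ?k ?m - int p * ?S ?k ?m - int p * ?C ?k ?m"
    using c' assms(1) unfolding c_def by (simp_all add: algebra_simps)
  moreover have "int p * trns_affine_trans f sec a \<omega>' i j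
      = int p * ?S ?k ?m - int p * ?S ?k j + int p * ?C ?k ?m"
    using assms(1,2) by (simp add: trns_affine_trans_def algebra_simps)
  moreover note Trns'_coord[OF assms(1,2)]
  ultimately show ?thesis
    using assms(1,2) by (simp add: dot_coord wsmul_def piInv_def wadd_def wsub_def; linarith)
qed

lemma Trns'_cong_dot_affine_Weyl:
  "\<exists>\<nu>\<in>LR f. \<exists>w\<in>Weyl f. cong_ppi p f (Trns' p f sec \<mu> \<omega>' a)
     (dot p f (can f \<nu>) w
        (wadd (wsub \<mu> (eta f)) (wsub (sec \<omega>') (wsmul (int p) (piInv f (sec \<omega>'))))))"
proof -
  let ?T = "Trns' p f sec \<mu> \<omega>' a" and ?w = "decomp_perm f a \<omega>'"
    and ?q = "trns_affine_trans f sec a \<omega>'"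
  let ?X = "wadd (wsub \<mu> (eta f)) (wsub (sec \<omega>') (wsmul (int p) (piInv f (sec \<omega>'))))"
  define c where
    "c i = sec \<omega>' i 0 - (sec (decomp_omega f a \<omega>') i 0 + can f (decomp_nu f a \<omega>') i 0)" for i
  define g :: "int wt" where "g i j = (if i < f \<and> j < 3 then c ((i + 1) mod f) else 0)" for i j
  have "wsub ?T (dot p f ?q ?w ?X) = wsub (wsmul (int p) g) (piF f g)"
  proof (intro ext)
    fix i j
    show "wsub ?T (dot p f ?q ?w ?X) i j = wsub (wsmul (int p) g) (piF f g) i j"
    proof (cases "i < f \<and> j < 3")
      case True
      then have "piF f g i j = c i" using mod_pred_Suc_mod[of i f] by (simp add: piF_def g_def)
      then show ?thesis
        using True Trns'_minus_dot_trns_affine_trans[of i j]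
        by (simp add: wsub_def wsmul_def g_def c_def)
    qed (use wf_Trns' wf_dot[of f p ?q ?w ?X] in
        \<open>auto simp: wf_def wsub_def wsmul_def g_def piF_def\<close>)
  qed
  moreover have "g \<in> X0 f" unfolding X0_def wf_def g_def by auto
  ultimately have "cong_ppi p f ?T (dot p f ?q ?w ?X)"
    unfolding cong_ppi_def by blast
  moreover have "can f (bar f ?q) = ?q"
    using can_bar_if_sum_zero wf_trns_affine_trans trns_affine_trans_sum_zero[OF \<omega>'_LW] by blast
  moreover have "bar f ?q \<in> LR f"
    using bar_mem_LR_if_sum_zero trns_affine_trans_sum_zero[OF \<omega>'_LW] by blast
  ultimately show ?thesis using decomp_perm_Weyl by (intro bexI[where x = "bar f ?q"]) auto
qed

end

lemma LWmu_iff_Trns'_in_C0: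
  assumes "0 < p" "is_section f sec" "\<omega>' \<in> LW f"
  shows "\<omega>' \<in> LWmu p f \<mu> \<longleftrightarrow>
    (\<exists>y\<in>Xstar f. in_C0 p f y \<and> cong_ppi p f (Trns' p f sec \<mu> \<omega>' (\<lambda>_. AlcA)) y)"
proof
  assume "\<omega>' \<in> LWmu p f \<mu>"
  then have "in_alc p f (alc_piInv f (\<lambda>_. AlcA)) (Trns' p f sec \<mu> \<omega>' (\<lambda>_. AlcA))"
    by (rule in_alc_Trns'[OF assms])
  then have "in_C0 p f (Trns' p f sec \<mu> \<omega>' (\<lambda>_. AlcA))"
    unfolding in_C0_def by (simp add: alc_piInv_def)
  then show "\<exists>y\<in>Xstar f. in_C0 p f y \<and> cong_ppi p f (Trns' p f sec \<mu> \<omega>' (\<lambda>_. AlcA)) y"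
    using wf_Trns'[OF assms] cong_ppi_refl unfolding Xstar_def by blast
next
  assume "\<exists>y\<in>Xstar f. in_C0 p f y \<and> cong_ppi p f (Trns' p f sec \<mu> \<omega>' (\<lambda>_. AlcA)) y"
  then have "in_alc p f (\<lambda>_. AlcA) (Trns' p f sec \<mu> \<omega>' (\<lambda>_. AlcA))"
    unfolding in_C0_def using in_alc_X0_equiv_iff cong_ppi_imp_X0_equiv by blast
  then show "\<omega>' \<in> LWmu p f \<mu>" by (rule LWmu_if_in_alc_Trns'[OF assms refl])
qed

lemma Trns'_regular_in_alcove_orbit:
  assumes "0 < p" "is_section f sec" "\<omega>' \<in> LWmu p f \<mu>"
  shows "p_regular p f (bar f (Trns' p f sec \<mu> \<omega>' a))
      \<and> (\<exists>\<nu>\<in>LW f. \<exists>w\<in>Weyl f. bar f (Trns' p f sec \<mu> \<omega>' a)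
            = bar f (dot p f \<nu> w (wadd \<omega>' (bar f (wsub \<mu> (eta f))))))
      \<and> in_alc p f (alc_piInv f a) (bar f (Trns' p f sec \<mu> \<omega>' a))
      \<and> (\<exists>\<nu>\<in>LR f. \<exists>w\<in>Weyl f. cong_ppi p f (Trns' p f sec \<mu> \<omega>' a)
            (dot p f (can f \<nu>) w
               (wadd (wsub \<mu> (eta f)) (wsub (sec \<omega>') (wsmul (int p) (piInv f (sec \<omega>')))))))"
proof -
  have "\<omega>' \<in> LW f" using assms(3) by (simp add: LWmu_def)
  note facts = assms(1,2) this
  show ?thesis
    using in_alc_imp_p_regular in_alc_bar_Trns'[OF facts assms(3)] bar_Trns'_eq[OF facts]
      neg_piInv_decomp_omega_LW decomp_perm_Weyl Trns'_cong_dot_affine_Weyl[OF facts]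
    by blast
qed

lemma Trns'_central_character:
  assumes "0 < p" "is_section f sec" "\<omega>' \<in> LW f"
  shows "resZ f (wadd (wsub (Trns' p f sec \<mu> \<omega>' a) \<mu>) (eta f))
        = resZ f (wsub (Trns' p f sec \<mu> \<omega>' a) \<mu>)
      \<and> (\<exists>z::nat \<Rightarrow> int. (\<forall>i\<ge>f. z i = 0) \<and>
            resZ f (wsub (Trns' p f sec \<mu> \<omega>' a) \<mu>) = (\<lambda>i. int p * z i - piZ f z i))"
  using resZ_wadd_eta resZ_Trns'_in_p_minus_pi[OF assms] by blast

theorem proposition2p4:
  fixes p f :: nat and \<mu> :: "int wt" and sec :: "int wt \<Rightarrow> int wt"
  assumes "prime p" and "1 \<le> f" and "\<mu> \<in> Xstar f" and "is_section f sec"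
  shows
    "((\<forall>\<omega>'\<in>LW f. \<omega>' \<in> LWmu p f \<mu> \<longleftrightarrow>
        (\<exists>y\<in>Xstar f. in_C0 p f y \<and> cong_ppi p f (Trns' p f sec \<mu> \<omega>' (\<lambda>_. AlcA)) y))
     \<and> (\<forall>\<omega>'\<in>LWmu p f \<mu>. p_regular p f (Trns' p f sec \<mu> \<omega>' (\<lambda>_. AlcA))))
   \<and> (\<forall>a\<in>calA f. \<forall>\<omega>'\<in>LWmu p f \<mu>.
        p_regular p f (bar f (Trns' p f sec \<mu> \<omega>' a))
      \<and> (\<exists>\<nu>\<in>LW f. \<exists>w\<in>Weyl f. bar f (Trns' p f sec \<mu> \<omega>' a)
            = bar f (dot p f \<nu> w (wadd \<omega>' (bar f (wsub \<mu> (eta f))))))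
      \<and> in_alc p f (alc_piInv f a) (bar f (Trns' p f sec \<mu> \<omega>' a))
      \<and> (\<exists>\<nu>\<in>LR f. \<exists>w\<in>Weyl f. cong_ppi p f (Trns' p f sec \<mu> \<omega>' a)
            (dot p f (can f \<nu>) w
               (wadd (wsub \<mu> (eta f)) (wsub (sec \<omega>') (wsmul (int p) (piInv f (sec \<omega>'))))))))
   \<and> (\<forall>a\<in>calA f. \<forall>\<omega>'\<in>LWmu p f \<mu>.
        resZ f (wadd (wsub (Trns' p f sec \<mu> \<omega>' a) \<mu>) (eta f))
          = resZ f (wsub (Trns' p f sec \<mu> \<omega>' a) \<mu>)
      \<and> (\<exists>z::nat \<Rightarrow> int. (\<forall>i\<ge>f. z i = 0) \<and>
            resZ f (wsub (Trns' p f sec \<mu> \<omega>' a) \<mu>) = (\<lambda>i. int p * z i - piZ f z i)))"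
proof -
  have p: "0 < p" using \<open>prime p\<close> by (simp add: prime_gt_0_nat)
  note sec = \<open>is_section f sec\<close>
  have LW: "\<omega>' \<in> LW f" if "\<omega>' \<in> LWmu p f \<mu>" for \<omega>' using that by (simp add: LWmu_def)
  show ?thesis
    using LWmu_iff_Trns'_in_C0[OF p sec] in_alc_imp_p_regular in_alc_Trns'[OF p sec LW]
      Trns'_regular_in_alcove_orbit[OF p sec] Trns'_central_character[OF p sec LW]
    by blast
qed

end
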